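(* Let $T$ be Takagi's function, $T(x)=\sum_{n=1}^\infty 2^{-n}\phi^{(n)}(x)$ on $[0,1]$, where $\phi(x)=2x$ for $0\le x\le1/2$, $\phi(x)=2-2x$ for $1/2\le x\le 1$, and $\phi^{(n)}$ is the $n$-fold composition. Let $x\in(0,1)$ be non-dyadic and write $x=\sum_{n=1}^\infty 2^{-a_n}$, $1-x=\sum_{n=1}^\infty 2^{-b_n}$ with $\{a_n\},\{b_n\}$ strictly increasing sequences of positive integers. Then: (i) $T'(x)=+\infty$ if and only if $a_{n+1}-2a_n+2n-\log_2(a_{n+1}-a_n)\to-\infty$; (ii) $T'(x)=-\infty$ if and only if $b_{n+1}-2b_n+2n-\log_2(b_{n+1}-b_n)\to-\infty$.
   Context: $T'(x)=+\infty$ (resp. $-\infty$) means $\lim_{h\to0}\frac{T(x+h)-T(x)}{h}=+\infty$ (resp. $-\infty$), the limit being two-sided. A dyadic point is one of the form $k/2^m$ with integers $k,m$. *)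

theory Defs
  imports "HOL-Analysis.Analysis"
begin

definition tent :: "real \<Rightarrow> real" where
  "tent x = (if x \<le> 1/2 then 2 * x else 2 - 2 * x)"

definition takagi :: "real \<Rightarrow> real" where
  "takagi x = (\<Sum>n. (tent ^^ (Suc n)) x / 2 ^ (Suc n))"

definition dyadic :: "real \<Rightarrow> bool" where
  "dyadic x \<longleftrightarrow> (\<exists>k::int. \<exists>m::nat. x = real_of_int k / 2 ^ m)"

end

theory Submission
  imports Defs
begin

(* Write c_i for the truncation of x to i binary digits and D_i for the number of zeros minus the
   number of ones among them. Then T is self-affine on the dyadic cell of x of level i,
     T (c_i + z 2^-i) = T c_i + (D_i z + T z) 2^-i,
   so a difference quotient of T across the midpoint of that cell is D_i plus a difference quotient
   of T across 1/2, which is controlled by T s <= s (log2 (1/s) + 2) and by T sigma ~ G sigma for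
   sigma ~ 2^-G. A point y ~= x leaves the cells of x at some level l. If the next digit of x is a 1,
   at position a_n, the quotient is at least -E_n - 1 (E_n the expression of the theorem); if it is
   a 0, the quotient is at least D_i - 3 for the last index i of the block of ones that follows.
   Conversely, with G = a_(n+1) - a_n, the point left of the midpoint of the cell of level a_n - 1
   at relative distance about 2^-(G - log2 G) gives a quotient at most 7 - E_n.
   The case T'(x) = -oo follows from T (1 - y) = T y. *)

lemma tent_in_unit: "0 \<le> y \<Longrightarrow> y \<le> 1 \<Longrightarrow> 0 \<le> tent y \<and> tent y \<le> 1"
  by (auto simp: tent_def)

lemma funpow_tent_in_unit: "0 \<le> y \<Longrightarrow> y \<le> 1 \<Longrightarrow> 0 \<le> (tent ^^ n) y \<and> (tent ^^ n) y \<le> 1"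
  by (induction n) (auto simp: tent_in_unit)

lemma takagi_term_le:
  assumes "0 \<le> y" "y \<le> 1"
  shows "0 \<le> (tent ^^ Suc n) y / 2 ^ Suc n \<and> (tent ^^ Suc n) y / 2 ^ Suc n \<le> (1/2) ^ Suc n"
  using funpow_tent_in_unit[OF assms, of "Suc n"] by (auto simp: power_divide intro!: divide_right_mono)

lemma summable_takagi:
  assumes "0 \<le> y" "y \<le> 1"
  shows "summable (\<lambda>n. (tent ^^ Suc n) y / 2 ^ Suc n)"
proof (rule summable_comparison_test')
  show "summable (\<lambda>n. (1/2::real) ^ Suc n)" by (simp add: summable_geometric)
  show "norm ((tent ^^ Suc n) y / 2 ^ Suc n) \<le> (1/2) ^ Suc n" for n
    using takagi_term_le[OF assms, of n] by (simp only: real_norm_def abs_of_nonneg)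
qed

lemma takagi_eq_tent:
  assumes "0 \<le> y" "y \<le> 1"
  shows "takagi y = tent y / 2 + takagi (tent y) / 2"
proof -
  let ?f = "\<lambda>n. (tent ^^ Suc n) y / 2 ^ Suc n"
  let ?g = "\<lambda>n. (tent ^^ Suc n) (tent y) / 2 ^ Suc n"
  have "summable ?f" by (rule summable_takagi[OF assms])
  then have "(\<Sum>n. ?f (Suc n)) = suminf ?f - ?f 0" by (rule suminf_split_head)
  moreover have "(\<lambda>n. ?f (Suc n)) = (\<lambda>n. ?g n / 2)"
    by (rule ext) (simp only: funpow_Suc_right comp_def, simp)
  moreover have "summable ?g" using summable_takagi tent_in_unit[OF assms] by blast
  then have "(\<Sum>n. ?g n / 2) = suminf ?g / 2" by (rule suminf_divide)
  ultimately show ?thesis by (simp add: takagi_def)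
qed

lemma takagi_reflect: "takagi (1 - y) = takagi y"
proof -
  have "tent (1 - y) = tent y" by (auto simp: tent_def)
  then have "(tent ^^ Suc n) (1 - y) = (tent ^^ Suc n) y" for n
    by (simp only: funpow_Suc_right comp_def)
  then show ?thesis by (simp add: takagi_def)
qed

lemma takagi_bounds:
  assumes "0 \<le> y" "y \<le> 1"
  shows "0 \<le> takagi y \<and> takagi y \<le> 1"
proof -
  let ?f = "\<lambda>n. (tent ^^ Suc n) y / 2 ^ Suc n"
  have s: "summable ?f" by (rule summable_takagi[OF assms])
  have "0 \<le> suminf ?f" by (rule suminf_nonneg[OF s]) (use takagi_term_le[OF assms] in blast)
  moreover have "suminf ?f \<le> (\<Sum>n. (1/2::real) ^ Suc n)"
    by (rule suminf_le[OF _ s]) (use takagi_term_le[OF assms] in \<open>auto simp: summable_geometric\<close>)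
  moreover have "(\<Sum>n. (1/2::real) ^ Suc n) = 1"
    using suminf_geometric[of "1/2::real"] suminf_divide[OF summable_geometric[of "1/2::real"], of 2]
    by simp
  ultimately show ?thesis by (simp add: takagi_def)
qed

lemma takagi_half: "0 \<le> z \<Longrightarrow> z \<le> 1 \<Longrightarrow> takagi (z / 2) = z / 2 + takagi z / 2"
  using takagi_eq_tent[of "z / 2"] by (simp add: tent_def)

lemma takagi_half_add_half:
  assumes "0 \<le> z" "z \<le> 1"
  shows "takagi ((1 + z) / 2) = (1 - z) / 2 + takagi z / 2"
proof -
  have "tent ((1 + z) / 2) = 1 - z" using assms by (auto simp: tent_def field_simps)
  then show ?thesis using takagi_eq_tent[of "(1 + z) / 2"] assms takagi_reflect[of z] by simp
qed

lemma takagi_zero [simp]: "takagi 0 = 0"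
  using takagi_half[of 0] by simp

lemma takagi_one [simp]: "takagi 1 = 0"
  using takagi_reflect[of 0] by simp

lemma takagi_mult_pow_half:
  assumes "0 \<le> z" "z \<le> 1"
  shows "takagi (z * (1/2) ^ p) = real p * z * (1/2) ^ p + takagi z * (1/2) ^ p"
proof (induction p)
  case (Suc p)
  have "0 \<le> z * (1/2) ^ p" "z * (1/2) ^ p \<le> 1"
    using assms by (auto intro: mult_le_one simp: power_le_one)
  then have "takagi (z * (1/2) ^ p / 2) = z * (1/2) ^ p / 2 + takagi (z * (1/2) ^ p) / 2"
    by (rule takagi_half)
  then show ?case using Suc by (simp add: field_simps)
qed simp

lemma takagi_pow_half: "takagi ((1/2) ^ j) = real j * (1/2) ^ j"
  using takagi_mult_pow_half[of 1 j] by simp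

lemma takagi_bounds_le_pow_half:
  assumes "0 \<le> s" "s \<le> (1/2) ^ j"
  shows "real j * s \<le> takagi s \<and> takagi s \<le> real j * s + (1/2) ^ j"
proof -
  define z where "z = s * 2 ^ j"
  have s_eq: "s = z * (1/2) ^ j" by (simp add: z_def power_divide)
  have z: "0 \<le> z" "z \<le> 1" using assms by (auto simp: z_def power_divide field_simps)
  have "takagi s = real j * s + takagi z * (1/2) ^ j"
    using takagi_mult_pow_half[OF z, of j] s_eq by simp
  moreover have "0 \<le> takagi z" "takagi z \<le> 1" using takagi_bounds[OF z] by auto
  ultimately show ?thesis by (simp add: mult_left_le_one_le)
qed

lemma takagi_le_log:
  assumes "0 < s" "s \<le> 1"
  shows "takagi s \<le> s * (log 2 (1/s) + 2)"
proof -
  define j where "j = nat \<lfloor>log 2 (1/s)\<rfloor>"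
  have "0 \<le> log 2 (1/s)" using assms by simp
  then have j: "real j \<le> log 2 (1/s)" "log 2 (1/s) < real j + 1"
    by (simp_all add: j_def)
  have "2 powr real j \<le> 1/s" using j(1) assms by (subst (asm) le_log_iff) auto
  then have s_le: "s \<le> (1/2) ^ j" using assms by (simp add: powr_realpow power_divide field_simps)
  have "1/s < 2 powr (real j + 1)" using j(2) assms by (subst (asm) log_less_iff) auto
  then have "(1/2) ^ j < 2 * s"
    using assms by (simp add: powr_add powr_realpow power_divide field_simps)
  then have "takagi s \<le> real j * s + 2 * s"
    using takagi_bounds_le_pow_half[OF _ s_le] assms by simp
  also have "\<dots> \<le> s * (log 2 (1/s) + 2)" using j(1) assms by (simp add: algebra_simps)
  finally show ?thesis .
qed

lemma takagi_near_pow_half: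
  assumes "1 \<le> G" "(1/2) ^ G \<le> \<sigma>" "\<sigma> \<le> 2 * (1/2::real) ^ G"
  shows "(real G - 1) * \<sigma> \<le> takagi \<sigma> \<and> takagi \<sigma> \<le> (real G + 1) * \<sigma>"
proof -
  have pow: "(1/2::real) ^ (G - 1) = 2 * (1/2) ^ G" using assms(1) by (cases G) auto
  have "(0::real) \<le> (1/2) ^ G" by simp
  then have "0 \<le> \<sigma>" using assms(2) by linarith
  then show ?thesis
    using takagi_bounds_le_pow_half[of \<sigma> "G - 1"] assms pow by (simp add: of_nat_diff algebra_simps)
qed

lemma log2_le_minus_one: "1 \<le> G \<Longrightarrow> log 2 (real G) \<le> real G - 1"
proof -
  assume G: "1 \<le> G"
  obtain m where m: "G = Suc m" using G by (cases G) auto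
  have "Suc m \<le> 2 ^ m" by (induction m) auto
  then have "real G \<le> 2 ^ (G - 1)" using m by (metis diff_Suc_1 of_nat_le_iff of_nat_numeral of_nat_power)
  then have "log 2 (real G) \<le> log 2 (2 ^ (G - 1))" using G by (intro log_mono) auto
  then show ?thesis using G by (simp add: log_nat_power)
qed

lemma log2_inverse_less: "(1/2) ^ k < s \<Longrightarrow> log 2 (1/s) < real k"
proof -
  assume k: "(1/2) ^ k < s"
  have p: "0 < (1/2::real) ^ k" by simp
  then have s: "0 < s" using k by linarith
  then have "1/s < 1 / (1/2) ^ k" using divide_strict_left_mono[OF k, of 1] p by simp
  then have "log 2 (1/s) < log 2 (2 ^ k)" using s by (intro log_less) (auto simp: power_divide)
  then show ?thesis by (simp add: log_nat_power)
qed

lemma mult_ln_inverse_le: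
  fixes s w :: real
  assumes "0 < s" "0 < w"
  shows "s * ln (1/s) \<le> w - s - s * ln w"
proof -
  have "ln (w / s) \<le> w / s - 1" by (rule ln_le_minus_one) (use assms in simp)
  then have "s * ln (w / s) \<le> s * (w / s - 1)" using assms by (intro mult_left_mono) auto
  moreover have "ln (w / s) = ln w + ln (1/s)" using assms by (simp add: ln_div)
  ultimately show ?thesis using assms by (simp add: algebra_simps)
qed

lemma mult_log2_inverse_le:
  assumes "0 < s" "1 \<le> G" "(1/2) ^ G \<le> \<sigma>"
  shows "s * log 2 (1/s) \<le> real G * \<sigma> + s * (real G + 1 - log 2 (real G))"
proof -
  have "(0::real) < (1/2) ^ G" by simp
  then have \<sigma>: "0 < \<sigma>" using assms(3) by linarith
  have "- real G * ln 2 \<le> ln \<sigma>"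
    using assms(3) \<sigma> ln_le_cancel_iff[of "(1/2)^G" \<sigma>] by (simp add: ln_realpow ln_div)
  then have ln_w: "ln (real G) - (real G + 1) * ln 2 \<le> ln (real G * \<sigma> / 2)"
    using assms \<sigma> by (simp add: ln_div ln_mult algebra_simps)
  have "s * ln (1/s) \<le> real G * \<sigma> / 2 - s - s * ln (real G * \<sigma> / 2)"
    using assms \<sigma> by (intro mult_ln_inverse_le) auto
  also have "\<dots> \<le> real G * \<sigma> / 2 + s * ((real G + 1) * ln 2 - ln (real G))"
    using ln_w assms(1) mult_left_mono[OF ln_w, of s] by (simp add: algebra_simps)
  also have "\<dots> \<le> ln 2 * (real G * \<sigma> + s * (real G + 1 - log 2 (real G)))"
    using ln2_ge_two_thirds assms \<sigma> by (simp add: log_def algebra_simps)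
  finally have "s * ln (1/s) / ln 2 \<le> real G * \<sigma> + s * (real G + 1 - log 2 (real G))"
    by (simp add: pos_divide_le_eq mult.commute)
  then show ?thesis by (simp add: log_def)
qed

definition centre_slope :: "real \<Rightarrow> real \<Rightarrow> real" where
  "centre_slope \<sigma> s = (s - \<sigma> + takagi \<sigma> - takagi s) / (\<sigma> + s)"

lemma centre_slope_eq:
  assumes "0 \<le> \<sigma>" "\<sigma> \<le> 1" "0 \<le> s" "s \<le> 1" "0 < \<sigma> + s"
  shows "(takagi ((1 + \<sigma>) / 2) - takagi ((1 - s) / 2)) / ((1 + \<sigma>) / 2 - (1 - s) / 2) = centre_slope \<sigma> s"
proof -
  have left: "takagi ((1 - s) / 2) = (1 - s) / 2 + takagi s / 2"
    using takagi_half[of "1 - s"] takagi_reflect[of s] assms by simp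
  have right: "takagi ((1 + \<sigma>) / 2) = (1 - \<sigma>) / 2 + takagi \<sigma> / 2"
    using takagi_half_add_half assms by simp
  show ?thesis unfolding left right using assms by (simp add: centre_slope_def field_simps)
qed

lemma centre_slope_ge_log:
  assumes "0 < \<sigma>" "\<sigma> \<le> 1" "0 < s" "s \<le> 1"
  shows "- (log 2 (1/s) + 1) \<le> centre_slope \<sigma> s"
proof -
  have "takagi s \<le> s * (log 2 (1/s) + 2)" using takagi_le_log assms by simp
  moreover have "0 \<le> takagi \<sigma>" using takagi_bounds assms by simp
  moreover have "0 \<le> log 2 (1/s) * \<sigma>" using assms by simp
  ultimately have "- (log 2 (1/s) + 1) * (\<sigma> + s) \<le> s - \<sigma> + takagi \<sigma> - takagi s"
    by (simp add: algebra_simps)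
  then show ?thesis using assms by (simp add: centre_slope_def pos_le_divide_eq)
qed

lemma centre_slope_ge_gap:
  assumes "1 \<le> G" "(1/2) ^ G \<le> \<sigma>" "\<sigma> \<le> 2 * (1/2::real) ^ G" "0 < s" "s \<le> 1"
  shows "- real G + log 2 (real G) - 2 \<le> centre_slope \<sigma> s"
proof -
  have "(0::real) < (1/2) ^ G" by simp
  then have \<sigma>: "0 < \<sigma>" using assms(2) by linarith
  have "(real G - 1) * \<sigma> \<le> takagi \<sigma>" using takagi_near_pow_half assms by simp
  moreover have "takagi s \<le> s * (log 2 (1/s) + 2)" using takagi_le_log assms by simp
  moreover have "s * log 2 (1/s) \<le> real G * \<sigma> + s * (real G + 1 - log 2 (real G))"
    using mult_log2_inverse_le assms by simp
  moreover have "log 2 (real G) * \<sigma> \<le> real G * \<sigma>"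
    using log2_le_minus_one[OF assms(1)] \<sigma> by (intro mult_right_mono) auto
  ultimately have "(- real G + log 2 (real G) - 2) * (\<sigma> + s) \<le> s - \<sigma> + takagi \<sigma> - takagi s"
    by (simp add: algebra_simps)
  then show ?thesis using assms \<sigma> by (simp add: centre_slope_def pos_le_divide_eq)
qed

lemma centre_slope_le:
  assumes "1 \<le> G" "(1/2) ^ G \<le> \<sigma>" "\<sigma> \<le> 2 * (1/2::real) ^ G"
    and "j \<le> G" "real G \<le> 2 ^ (G - j)"
  shows "centre_slope \<sigma> ((1/2) ^ j) \<le> 5 - real j"
proof -
  let ?s = "(1/2::real) ^ j"
  have "(0::real) < (1/2) ^ G" by simp
  then have \<sigma>: "0 < \<sigma>" using assms(2) by linarith
  have "\<sigma> / ?s \<le> 2 * (1/2) ^ G * 2 ^ j"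
    using mult_right_mono[OF assms(3), of "2 ^ j"] by (simp add: power_divide)
  also have "\<dots> = 2 / 2 ^ (G - j)"
    using assms(4) by (simp add: power_divide power_diff field_simps)
  also have "\<dots> \<le> 2 / real G" using assms(1,5) by (simp add: frac_le)
  finally have "\<sigma> / (\<sigma> + ?s) \<le> 2 / real G"
    using \<sigma> frac_le[of \<sigma> \<sigma> ?s "\<sigma> + ?s"] by simp
  then have "(real G + real j - 1) * (\<sigma> / (\<sigma> + ?s)) \<le> (real G + real j - 1) * (2 / real G)"
    using assms(1) by (intro mult_left_mono) auto
  also have "\<dots> \<le> 4" using assms(1,4) by (simp add: field_simps)
  finally have "(real G + real j - 1) * (\<sigma> / (\<sigma> + ?s)) * (\<sigma> + ?s) \<le> 4 * (\<sigma> + ?s)"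
    using \<sigma> by (intro mult_right_mono) auto
  moreover have pos: "0 < \<sigma> + ?s" using \<sigma> by (simp add: add_pos_pos)
  ultimately have ratio: "(real G + real j - 1) * \<sigma> \<le> 4 * (\<sigma> + ?s)"
    by (simp split: if_splits)
  have "takagi \<sigma> \<le> (real G + 1) * \<sigma>" using takagi_near_pow_half assms by simp
  then have "?s - \<sigma> + takagi \<sigma> - takagi ?s \<le> (5 - real j) * (\<sigma> + ?s)"
    using ratio takagi_pow_half[of j] by (simp add: algebra_simps)
  then show ?thesis using pos by (simp add: centre_slope_def pos_divide_le_eq)
qed

lemma divide_diff_swap: "(p - q) / (u - v) = (q - p) / (v - (u::real))"
  by (metis minus_diff_eq minus_divide_divide)

lemma eq_add_mult_pow_half_iff: "(y::real) = c + t * (1/2) ^ l \<longleftrightarrow> t = (y - c) * 2 ^ l"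
  by (auto simp: power_divide field_simps)

lemma dyadic_one_minus: "dyadic x \<Longrightarrow> dyadic (1 - x)"
proof -
  assume "dyadic x"
  then obtain k :: int and m :: nat where "x = of_int k / 2 ^ m" by (auto simp: dyadic_def)
  then have "1 - x = of_int (2 ^ m - k) / 2 ^ m" by (simp add: field_simps)
  then show ?thesis unfolding dyadic_def by blast
qed

lemma filterlim_at_0_reflect: "filterlim (\<lambda>h. f (- h)) F (at (0::real)) \<longleftrightarrow> filterlim f F (at 0)"
proof -
  have "filtermap (\<lambda>h. f (- h)) (at (0::real)) = filtermap f (filtermap uminus (at 0))"
    by (simp add: filtermap_filtermap)
  also have "filtermap uminus (at (0::real)) = at 0" using filtermap_at_minus[of "0::real"] by simp
  finally show ?thesis unfolding filterlim_def by simp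
qed

locale nondyadic_expansion =
  fixes x :: real and a :: "nat \<Rightarrow> nat"
  assumes not_dyadic: "\<not> dyadic x"
    and strict_mono: "strict_mono a"
    and positive: "\<forall>k. 1 \<le> a k"
    and sums_x: "(\<lambda>k. (1/2) ^ a k) sums x"
begin

text \<open>The binary digit of \<open>x\<close> at position \<open>i \<ge> 1\<close> is 1 iff \<open>i \<in> range a\<close>;
  \<open>ones i\<close> counts these among the first \<open>i\<close> digits, \<open>trunc i\<close> is the truncation
  of \<open>x\<close> to \<open>i\<close> digits, and \<open>balance i\<close> is the number of zeros minus the number of ones.\<close>

definition ones :: "nat \<Rightarrow> nat" where
  "ones i = (LEAST k. i < a k)"

definition trunc :: "nat \<Rightarrow> real" where
  "trunc i = (\<Sum>k<ones i. (1/2) ^ a k)"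

definition balance :: "nat \<Rightarrow> real" where
  "balance i = real i - 2 * real (ones i)"

definition cell :: "nat \<Rightarrow> real set" where
  "cell i = {trunc i .. trunc i + (1/2) ^ i}"

lemma a_less_a_Suc: "a k < a (Suc k)"
  using strict_mono by (simp add: strict_mono_def)

lemma index_le_a: "n \<le> a n"
  using strict_mono by (rule seq_suble)

lemma a_add_le: "a m + n \<le> a (m + n)"
proof (induction n)
  case (Suc n)
  then show ?case using a_less_a_Suc[of "m + n"] by simp
qed simp

lemma less_a_ones: "i < a (ones i)"
proof -
  have "i < a (Suc i)" using index_le_a[of "Suc i"] by simp
  then show ?thesis unfolding ones_def by (rule LeastI)
qed

lemma less_ones_iff: "k < ones i \<longleftrightarrow> a k \<le> i"
proof
  show "k < ones i \<Longrightarrow> a k \<le> i" unfolding ones_def using not_less_Least by fastforce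
  show "a k \<le> i \<Longrightarrow> k < ones i"
    using less_a_ones[of i] strict_mono by (metis le_less_trans not_less strict_mono_less_eq)
qed

lemma ones_eqI: "(\<And>k. k < n \<Longrightarrow> a k \<le> i) \<Longrightarrow> i < a n \<Longrightarrow> ones i = n"
  unfolding ones_def by (rule Least_equality) (auto simp: not_less[symmetric])

lemma ones_zero: "ones 0 = 0"
  by (rule ones_eqI) (use positive in \<open>auto simp: Suc_le_eq\<close>)

lemma ones_a: "ones (a k) = Suc k"
  by (rule ones_eqI) (use strict_mono a_less_a_Suc in \<open>auto simp: strict_mono_less_eq\<close>)

lemma ones_a_pred: "ones (a k - 1) = k"
proof (rule ones_eqI)
  show "a j \<le> a k - 1" if "j < k" for j
  proof -
    have "a j < a k" using that strict_mono by (simp add: strict_mono_less)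
    then show ?thesis by simp
  qed
  show "a k - 1 < a k" using positive by (simp add: Suc_le_eq)
qed

lemma ones_Suc_digit_one: "Suc i = a k \<Longrightarrow> ones (Suc i) = Suc (ones i)"
  using ones_a[of k] ones_a_pred[of k] by (metis diff_Suc_1)

lemma ones_Suc_digit_zero: "Suc i \<notin> range a \<Longrightarrow> ones (Suc i) = ones i"
proof (rule ones_eqI)
  show "k < ones i \<Longrightarrow> a k \<le> Suc i" for k using less_ones_iff by fastforce
  assume "Suc i \<notin> range a"
  then have "a (ones i) \<noteq> Suc i" by (metis rangeI)
  then show "Suc i < a (ones i)" using less_a_ones[of i] by simp
qed

lemma trunc_zero: "trunc 0 = 0"
  by (simp add: trunc_def ones_zero)

lemma balance_zero: "balance 0 = 0"
  by (simp add: balance_def ones_zero)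

lemma trunc_Suc_digit_one: "Suc i \<in> range a \<Longrightarrow> trunc (Suc i) = trunc i + (1/2) ^ Suc i"
proof -
  assume "Suc i \<in> range a"
  then obtain k where k: "Suc i = a k" by auto
  then have "ones i = k" using ones_a_pred[of k] by (metis diff_Suc_1)
  then show ?thesis using ones_Suc_digit_one[OF k] k by (simp add: trunc_def)
qed

lemma trunc_Suc_digit_zero: "Suc i \<notin> range a \<Longrightarrow> trunc (Suc i) = trunc i"
  by (simp add: trunc_def ones_Suc_digit_zero)

lemma balance_Suc_digit_one: "Suc i \<in> range a \<Longrightarrow> balance (Suc i) = balance i - 1"
  by (auto simp: balance_def dest: ones_Suc_digit_one)

lemma balance_Suc_digit_zero: "Suc i \<notin> range a \<Longrightarrow> balance (Suc i) = balance i + 1"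
  by (simp add: balance_def ones_Suc_digit_zero)

lemma balance_a: "balance (a k) = real (a k) - 2 * (real k + 1)"
  by (simp add: balance_def ones_a)

lemma balance_a_pred: "Suc l = a n \<Longrightarrow> balance l = real (a n) - 1 - 2 * real n"
proof -
  assume l: "Suc l = a n"
  then have "ones l = n" using ones_a_pred[of n] by (metis diff_Suc_1)
  then show ?thesis using l by (simp add: balance_def)
qed

lemma trunc_dyadic: "\<exists>m::int. trunc i = of_int m / 2 ^ i"
proof (induction i)
  case 0
  then show ?case by (auto simp: trunc_zero)
next
  case (Suc i)
  then obtain m where m: "trunc i = of_int m / 2 ^ i" by blast
  show ?case
  proof (cases "Suc i \<in> range a")
    case True
    then show ?thesis
      by (intro exI[of _ "2 * m + 1"]) (simp add: trunc_Suc_digit_one m field_simps power_divide)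
  next
    case False
    then show ?thesis
      by (intro exI[of _ "2 * m"]) (simp add: trunc_Suc_digit_zero m field_simps)
  qed
qed

lemma x_minus_trunc: "x - trunc i = (\<Sum>n. (1/2) ^ a (n + ones i))"
proof -
  have "summable (\<lambda>k. (1/2::real) ^ a k)" using sums_x by (rule sums_summable)
  from suminf_split_initial_segment[OF this, of "ones i"] show ?thesis
    using sums_unique[OF sums_x] by (simp add: trunc_def)
qed

lemma x_minus_trunc_bounds: "(1/2) ^ a (ones i) \<le> x - trunc i \<and> x - trunc i \<le> 2 * (1/2) ^ a (ones i)"
proof -
  let ?g = "\<lambda>n. (1/2::real) ^ a (n + ones i)"
  have "summable (\<lambda>k. (1/2::real) ^ a k)" using sums_x by (rule sums_summable)
  then have g: "summable ?g" using summable_iff_shift[of "\<lambda>k. (1/2::real) ^ a k" "ones i"] by simp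
  have "?g n \<le> (1/2) ^ a (ones i) * (1/2) ^ n" for n
    using a_add_le[of "ones i" n] by (simp add: power_add[symmetric] add.commute power_decreasing)
  then have "suminf ?g \<le> (\<Sum>n. (1/2) ^ a (ones i) * (1/2::real) ^ n)"
    by (intro suminf_le g summable_mult summable_geometric) auto
  also have "\<dots> = 2 * (1/2) ^ a (ones i)"
    using suminf_mult[OF summable_geometric[of "1/2::real"]] suminf_geometric[of "1/2::real"] by simp
  finally have "suminf ?g \<le> 2 * (1/2) ^ a (ones i)" .
  moreover have "sum ?g {0} \<le> suminf ?g" by (rule sum_le_suminf[OF g]) auto
  ultimately show ?thesis using x_minus_trunc[of i] by simp
qed

lemma x_in_cell: "trunc i < x \<and> x < trunc i + (1/2) ^ i"
proof -
  have "(1/2::real) ^ a (ones i) \<le> (1/2) ^ Suc i"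
    using less_a_ones[of i] by (intro power_decreasing) auto
  then have le: "x - trunc i \<le> (1/2) ^ i" using x_minus_trunc_bounds[of i] by simp
  obtain m where m: "trunc i = of_int m / 2 ^ i" using trunc_dyadic by blast
  then have "x \<noteq> trunc i + (1/2) ^ i"
    using not_dyadic unfolding dyadic_def
    by (metis (no_types) add_divide_distrib of_int_add of_int_1 one_power2 power_one_over)
  moreover have "0 < (1/2::real) ^ a (ones i)" by simp
  ultimately show ?thesis using le x_minus_trunc_bounds[of i] by linarith
qed

lemma takagi_trunc_add:
  assumes "0 \<le> z" "z \<le> 1"
  shows "takagi (trunc i + z * (1/2) ^ i) = takagi (trunc i) + balance i * z * (1/2) ^ i + takagi z * (1/2) ^ i"
  using assms
proof (induction i arbitrary: z)
  case 0
  then show ?case by (simp add: trunc_zero balance_zero)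
next
  case (Suc i)
  show ?case
  proof (cases "Suc i \<in> range a")
    case True
    have z: "0 \<le> (1 + z) / 2" "(1 + z) / 2 \<le> 1" using Suc.prems by auto
    have "trunc (Suc i) + z * (1/2) ^ Suc i = trunc i + (1 + z) / 2 * (1/2) ^ i"
      by (simp add: trunc_Suc_digit_one[OF True] field_simps)
    then have step: "takagi (trunc (Suc i) + z * (1/2) ^ Suc i)
        = takagi (trunc i) + balance i * ((1 + z) / 2) * (1/2) ^ i + ((1 - z) / 2 + takagi z / 2) * (1/2) ^ i"
      using Suc.IH[OF z] takagi_half_add_half[OF Suc.prems] by simp
    have "trunc (Suc i) = trunc i + 1/2 * (1/2) ^ i" by (simp add: trunc_Suc_digit_one[OF True])
    then have start: "takagi (trunc (Suc i)) = takagi (trunc i) + balance i * (1/2) * (1/2) ^ i + 1/2 * (1/2) ^ i"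
      using Suc.IH[of "1/2"] takagi_half_add_half[of 0] by simp
    show ?thesis unfolding step start balance_Suc_digit_one[OF True] by (simp add: field_simps)
  next
    case False
    have z: "0 \<le> z / 2" "z / 2 \<le> 1" using Suc.prems by auto
    have "trunc (Suc i) + z * (1/2) ^ Suc i = trunc i + z / 2 * (1/2) ^ i"
      by (simp add: trunc_Suc_digit_zero[OF False] field_simps)
    then have "takagi (trunc (Suc i) + z * (1/2) ^ Suc i)
        = takagi (trunc i) + balance i * (z / 2) * (1/2) ^ i + (z / 2 + takagi z / 2) * (1/2) ^ i"
      using Suc.IH[OF z] takagi_half[OF Suc.prems] by simp
    also have "\<dots> = takagi (trunc (Suc i)) + balance (Suc i) * z * (1/2) ^ Suc i + takagi z * (1/2) ^ Suc i"
      by (simp add: trunc_Suc_digit_zero[OF False] balance_Suc_digit_zero[OF False] field_simps)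
    finally show ?thesis .
  qed
qed

lemma slope_across_cell_midpoint:
  assumes "0 \<le> \<sigma>" "\<sigma> \<le> 1" "0 \<le> s" "s \<le> 1" "0 < \<sigma> + s"
  shows "(takagi (trunc l + (1 + \<sigma>) / 2 * (1/2) ^ l) - takagi (trunc l + (1 - s) / 2 * (1/2) ^ l))
          / ((trunc l + (1 + \<sigma>) / 2 * (1/2) ^ l) - (trunc l + (1 - s) / 2 * (1/2) ^ l))
         = balance l + centre_slope \<sigma> s"
proof -
  let ?u = "(1 - s) / 2" and ?v = "(1 + \<sigma>) / 2" and ?h = "(1/2::real) ^ l"
  have num: "takagi (trunc l + ?v * ?h) - takagi (trunc l + ?u * ?h)
      = (balance l * (?v - ?u) + (takagi ?v - takagi ?u)) * ?h"
    using takagi_trunc_add[of ?v l] takagi_trunc_add[of ?u l] assms by (simp add: algebra_simps)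
  have den: "(trunc l + ?v * ?h) - (trunc l + ?u * ?h) = (?v - ?u) * ?h"
    by (simp add: algebra_simps)
  have "?v - ?u \<noteq> 0" using assms by simp
  then have "(balance l * (?v - ?u) + (takagi ?v - takagi ?u)) / (?v - ?u)
      = balance l + (takagi ?v - takagi ?u) / (?v - ?u)"
    by (simp add: add_divide_distrib)
  then show ?thesis unfolding num den centre_slope_eq[OF assms, symmetric] by simp
qed

text \<open>The paper's \<open>a\<^sub>n\<^sub>+\<^sub>1 - 2 a\<^sub>n + 2 n - log\<^sub>2 (a\<^sub>n\<^sub>+\<^sub>1 - a\<^sub>n)\<close> with \<open>n = k + 1\<close>,
  since the sequence \<open>a\<close> is indexed from 0 here.\<close>

definition growth :: "nat \<Rightarrow> real" where
  "growth k = real (a (Suc k)) - 2 * real (a k) + 2 * (real k + 1) - log 2 (real (a (Suc k)) - real (a k))"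

lemma growth_eq_gap:
  "growth n = real (a (Suc n) - a n) - real (a n) + 2 * real n + 2 - log 2 (real (a (Suc n) - a n))"
  using a_less_a_Suc[of n] by (simp add: growth_def of_nat_diff)

lemma balance_a_ge_growth: "1 - growth k \<le> balance (a k)"
proof -
  have "1 \<le> a (Suc k) - a k" using a_less_a_Suc[of k] by simp
  from log2_le_minus_one[OF this] show ?thesis by (simp add: growth_eq_gap balance_a)
qed

lemma balance_ge_at_digit: "a k \<le> i \<Longrightarrow> \<exists>k'\<ge>k. balance (a k') \<le> balance i"
proof -
  assume "a k \<le> i"
  then have k: "k < ones i" by (simp add: less_ones_iff)
  then have "a (ones i - 1) \<le> i" by (simp add: less_ones_iff[symmetric])
  moreover have "ones (a (ones i - 1)) = ones i" using k by (simp add: ones_a)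
  ultimately have "balance (a (ones i - 1)) \<le> balance i" by (simp add: balance_def)
  then show ?thesis using k by (intro exI[of _ "ones i - 1"]) auto
qed

lemma trunc_balance_along_ones:
  assumes "Suc l \<notin> range a" "Suc l \<le> i" "\<forall>i'. Suc (Suc l) \<le> i' \<and> i' \<le> i \<longrightarrow> i' \<in> range a"
  shows "trunc i = trunc l + (1/2) ^ Suc l - (1/2) ^ i \<and> balance i = balance l + real l + 2 - real i"
proof -
  have "(\<forall>i'. Suc (Suc l) \<le> i' \<and> i' \<le> i \<longrightarrow> i' \<in> range a) \<longrightarrow>
        trunc i = trunc l + (1/2) ^ Suc l - (1/2) ^ i \<and> balance i = balance l + real l + 2 - real i"
    using assms(2)
  proof (induction i rule: dec_induct)
    case base
    show ?case by (simp add: trunc_Suc_digit_zero[OF assms(1)] balance_Suc_digit_zero[OF assms(1)])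
  next
    case (step i)
    show ?case
    proof
      assume ones: "\<forall>i'. Suc (Suc l) \<le> i' \<and> i' \<le> Suc i \<longrightarrow> i' \<in> range a"
      then have "Suc i \<in> range a" using step.hyps by auto
      then show "trunc (Suc i) = trunc l + (1/2) ^ Suc l - (1/2) ^ Suc i
          \<and> balance (Suc i) = balance l + real l + 2 - real (Suc i)"
        using step.IH ones by (simp add: trunc_Suc_digit_one balance_Suc_digit_one)
    qed
  qed
  then show ?thesis using assms(3) by blast
qed

lemma x_right_of_midpoint:
  assumes "Suc l = a n"
  obtains \<sigma> where "(1/2) ^ (a (Suc n) - a n) \<le> \<sigma>" "\<sigma> \<le> 2 * (1/2) ^ (a (Suc n) - a n)"
    "x = trunc l + (1 + \<sigma>) / 2 * (1/2) ^ l"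
proof
  let ?G = "a (Suc n) - a n"
  define \<sigma> where "\<sigma> = (x - trunc (a n)) * 2 ^ a n"
  have scale: "(1/2::real) ^ a (Suc n) * 2 ^ a n = (1/2) ^ ?G"
    using a_less_a_Suc[of n] by (simp add: power_diff power_divide)
  have "(1/2) ^ a (Suc n) \<le> x - trunc (a n)" "x - trunc (a n) \<le> 2 * (1/2) ^ a (Suc n)"
    using x_minus_trunc_bounds[of "a n"] by (simp_all add: ones_a)
  then show "(1/2) ^ ?G \<le> \<sigma>" "\<sigma> \<le> 2 * (1/2) ^ ?G"
    unfolding \<sigma>_def scale[symmetric] by (simp_all add: mult_right_mono)
  have "trunc (a n) = trunc l + (1/2) ^ a n"
    using trunc_Suc_digit_one[of l] assms by (metis rangeI)
  then show "x = trunc l + (1 + \<sigma>) / 2 * (1/2) ^ l"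
    using assms[symmetric] by (simp add: \<sigma>_def power_divide field_simps)
qed

lemma cell_Suc_digit_one: "Suc l \<in> range a \<Longrightarrow> cell (Suc l) = {trunc l + (1/2) ^ Suc l .. trunc l + (1/2) ^ l}"
  by (simp add: cell_def trunc_Suc_digit_one)

lemma cell_Suc_digit_zero: "Suc l \<notin> range a \<Longrightarrow> cell (Suc l) = {trunc l .. trunc l + (1/2) ^ Suc l}"
  by (simp add: cell_def trunc_Suc_digit_zero)

lemma slope_ge_at_digit_one:
  assumes l: "Suc l = a n" and y: "y \<in> cell l" "y \<notin> cell (Suc l)"
  shows "- growth n - 1 \<le> (takagi y - takagi x) / (y - x)"
proof -
  let ?G = "a (Suc n) - a n"
  obtain \<sigma> where \<sigma>: "(1/2) ^ ?G \<le> \<sigma>" "\<sigma> \<le> 2 * (1/2) ^ ?G" and x: "x = trunc l + (1 + \<sigma>) / 2 * (1/2) ^ l"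
    by (rule x_right_of_midpoint[OF l])
  have G: "1 \<le> ?G" using a_less_a_Suc[of n] by simp
  have "0 < (1/2::real) ^ ?G" "(1/2::real) ^ ?G \<le> 1/2"
    using power_decreasing[OF G, of "1/2::real"] by auto
  then have \<sigma>_unit: "0 < \<sigma>" "\<sigma> \<le> 1" using \<sigma> by linarith+
  define s where "s = 1 - 2 * ((y - trunc l) * 2 ^ l)"
  have "y < trunc l + (1/2) ^ Suc l" "trunc l \<le> y"
    using y cell_Suc_digit_one[of l] l by (auto simp: cell_def)
  then have s: "0 < s" "s \<le> 1"
    by (auto simp: s_def eq_add_mult_pow_half_iff power_divide field_simps)
  have "y = trunc l + (1 - s) / 2 * (1/2) ^ l"
    by (simp add: s_def eq_add_mult_pow_half_iff)
  then have "(takagi y - takagi x) / (y - x) = balance l + centre_slope \<sigma> s"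
    using slope_across_cell_midpoint[of \<sigma> s l] \<sigma>_unit s x divide_diff_swap by simp
  moreover have "- real ?G + log 2 (real ?G) - 2 \<le> centre_slope \<sigma> s"
    using centre_slope_ge_gap[OF G \<sigma>] s by simp
  ultimately show ?thesis using balance_a_pred[OF l] growth_eq_gap[of n] by simp
qed

lemma next_digit_zero:
  assumes l: "Suc l \<notin> range a"
  obtains q where "Suc (Suc l) \<le> q" "x - trunc l < (1/2) ^ Suc l - (1/2) ^ q"
    "balance (q - 1) = balance l + real l + 3 - real q"
proof -
  have x_lt: "x - trunc l < (1/2) ^ Suc l"
    using x_in_cell[of "Suc l"] trunc_Suc_digit_zero[OF l] by simp
  have "\<exists>i. Suc (Suc l) \<le> i \<and> i \<notin> range a"
    \<comment> \<open>otherwise \<open>x = trunc l + (1/2) ^ Suc l\<close> would be dyadic\<close>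
  proof (rule ccontr)
    assume "\<nexists>i. Suc (Suc l) \<le> i \<and> i \<notin> range a"
    then have all_ones: "trunc i = trunc l + (1/2) ^ Suc l - (1/2) ^ i" if "Suc l \<le> i" for i
      using trunc_balance_along_ones[OF l that] by blast
    obtain i where i: "(1/2::real) ^ i < (1/2) ^ Suc l - (x - trunc l)"
      using real_arch_pow_inv[of "(1/2) ^ Suc l - (x - trunc l)" "1/2"] x_lt by auto
    define i' where "i' = max i (Suc l)"
    have "(1/2::real) ^ i' \<le> (1/2) ^ i" by (auto simp: i'_def intro: power_decreasing)
    moreover have "trunc i' < x" using x_in_cell by blast
    moreover have "trunc i' = trunc l + (1/2) ^ Suc l - (1/2) ^ i'" by (rule all_ones) (simp add: i'_def)
    ultimately show False using i by linarith
  qed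
  then obtain q where q: "Suc (Suc l) \<le> q" "q \<notin> range a"
    and before_q: "\<And>i. Suc (Suc l) \<le> i \<Longrightarrow> i < q \<Longrightarrow> i \<in> range a"
    using exists_least_iff[of "\<lambda>i. Suc (Suc l) \<le> i \<and> i \<notin> range a"] by auto
  have run: "trunc (q - 1) = trunc l + (1/2) ^ Suc l - (1/2) ^ (q - 1)
      \<and> balance (q - 1) = balance l + real l + 2 - real (q - 1)"
    using q before_q by (intro trunc_balance_along_ones[OF l]) auto
  have "trunc q = trunc (q - 1)" using trunc_Suc_digit_zero[of "q - 1"] q by (simp add: Suc_diff_Suc)
  moreover have "(1/2::real) ^ (q - 1) = 2 * (1/2) ^ q" using q by (cases q) auto
  ultimately have "x - trunc l < (1/2) ^ Suc l - (1/2) ^ q" using x_in_cell[of q] run by simp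
  moreover have "balance (q - 1) = balance l + real l + 3 - real q" using run q by (simp add: of_nat_diff)
  ultimately show ?thesis using that q by blast
qed

lemma slope_ge_at_digit_zero:
  assumes l: "Suc l \<notin> range a" and y: "y \<in> cell l" "y \<notin> cell (Suc l)"
  shows "\<exists>i>l. balance i - 3 \<le> (takagi y - takagi x) / (y - x)"
proof -
  obtain q where q: "Suc (Suc l) \<le> q" "x - trunc l < (1/2) ^ Suc l - (1/2) ^ q"
    and balance_q: "balance (q - 1) = balance l + real l + 3 - real q"
    by (rule next_digit_zero[OF l])
  define k where "k = q - Suc l"
  define \<sigma> where "\<sigma> = 2 * ((y - trunc l) * 2 ^ l) - 1"
  define s where "s = 1 - 2 * ((x - trunc l) * 2 ^ l)"
  have "trunc l + (1/2) ^ Suc l < y" "y \<le> trunc l + (1/2) ^ l"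
    using y cell_Suc_digit_zero[OF l] by (auto simp: cell_def)
  then have \<sigma>_unit: "0 < \<sigma>" "\<sigma> \<le> 1"
    by (auto simp: \<sigma>_def eq_add_mult_pow_half_iff power_divide field_simps)
  have "(1/2::real) ^ q * 2 ^ Suc l = (1/2) ^ k"
    using q by (simp add: k_def power_diff power_divide)
  then have s_gt: "(1/2) ^ k < s"
    using mult_strict_right_mono[OF q(2), of "2 ^ Suc l"] power_mult_distrib[of 2 "1/2::real" l]
    by (simp add: s_def algebra_simps)
  have "0 < (1/2::real) ^ k" by simp
  then have s: "0 < s" "s \<le> 1"
    using s_gt x_in_cell[of l] by (linarith, simp add: s_def)
  have "y = trunc l + (1 + \<sigma>) / 2 * (1/2) ^ l" "x = trunc l + (1 - s) / 2 * (1/2) ^ l"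
    by (simp_all add: \<sigma>_def s_def eq_add_mult_pow_half_iff)
  then have "(takagi y - takagi x) / (y - x) = balance l + centre_slope \<sigma> s"
    using slope_across_cell_midpoint[of \<sigma> s l] \<sigma>_unit s by simp
  moreover have "- (log 2 (1/s) + 1) \<le> centre_slope \<sigma> s"
    using centre_slope_ge_log \<sigma>_unit s by simp
  moreover have "l < q - 1" using q by simp
  ultimately show ?thesis
    using log2_inverse_less[OF s_gt] balance_q q by (intro exI[of _ "q - 1"]) (simp add: k_def of_nat_diff)
qed

lemma cell_separates:
  assumes "y \<in> cell L" "y \<noteq> x"
  obtains l where "L \<le> l" "y \<in> cell l" "y \<notin> cell (Suc l)"
proof (rule ccontr)
  assume "\<not> thesis"
  with that have stays: "\<And>l. L \<le> l \<Longrightarrow> y \<in> cell l \<Longrightarrow> y \<in> cell (Suc l)" by blast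
  have in_cell: "y \<in> cell n" if "L \<le> n" for n
    using that by (induction rule: dec_induct) (use assms(1) stays in auto)
  obtain n where n: "(1/2::real) ^ n < \<bar>y - x\<bar>"
    using real_arch_pow_inv[of "\<bar>y - x\<bar>" "1/2"] assms(2) by auto
  have "(1/2::real) ^ max n L \<le> (1/2) ^ n" by (intro power_decreasing) auto
  moreover have "\<bar>y - x\<bar> \<le> (1/2) ^ max n L"
    using in_cell[of "max n L"] x_in_cell[of "max n L"] by (auto simp: cell_def)
  ultimately show False using n by linarith
qed

lemma diff_quot_tendsto_top:
  assumes "filterlim growth at_bot sequentially"
  shows "filterlim (\<lambda>h. (takagi (x + h) - takagi x) / h) at_top (at 0)"
  unfolding filterlim_at_top
proof
  fix Z :: real
  obtain K where K: "\<And>k. K \<le> k \<Longrightarrow> growth k \<le> - Z - 5"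
    using assms by (auto simp: filterlim_at_bot eventually_sequentially)
  have balance_large: "Z + 6 \<le> balance i" if i: "a K \<le> i" for i
  proof -
    obtain k where "K \<le> k" "balance (a k) \<le> balance i" using balance_ge_at_digit[OF i] by blast
    then show ?thesis using balance_a_ge_growth[of k] K[of k] by linarith
  qed
  define L where "L = Suc (a K)"
  have slope_large: "Z \<le> (takagi y - takagi x) / (y - x)" if y: "y \<in> cell L" "y \<noteq> x" for y
  proof -
    obtain l where l: "L \<le> l" "y \<in> cell l" "y \<notin> cell (Suc l)" by (rule cell_separates[OF y])
    show ?thesis
    proof (cases "Suc l \<in> range a")
      case True
      then obtain n where n: "Suc l = a n" by auto
      then have "a K < a n" using l(1) by (simp add: L_def)
      then have "K \<le> n" using strict_mono by (simp add: strict_mono_less less_imp_le)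
      then show ?thesis using slope_ge_at_digit_one[OF n l(2,3)] K[of n] by linarith
    next
      case False
      then obtain i where "l < i" "balance i - 3 \<le> (takagi y - takagi x) / (y - x)"
        using slope_ge_at_digit_zero l(2,3) by blast
      moreover have "a K \<le> i" using \<open>l < i\<close> l(1) by (simp add: L_def)
      ultimately show ?thesis using balance_large by fastforce
    qed
  qed
  define \<delta> where "\<delta> = min (x - trunc L) (trunc L + (1/2) ^ L - x)"
  have "0 < \<delta>" using x_in_cell[of L] by (simp add: \<delta>_def)
  moreover have "x + h \<in> cell L" if "\<bar>h\<bar> < \<delta>" for h
    using that by (auto simp: \<delta>_def cell_def abs_less_iff)
  ultimately show "\<forall>\<^sub>F h in at 0. Z \<le> (takagi (x + h) - takagi x) / h"
    unfolding eventually_at using slope_large[of "x + _"] by (auto simp: dist_real_def)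
qed

lemma slope_le_before_digit:
  assumes "j \<le> a (Suc n) - a n" "real (a (Suc n) - a n) \<le> 2 ^ (a (Suc n) - a n - j)"
  obtains y where "y \<noteq> x" "\<bar>y - x\<bar> \<le> 2 * (1/2) ^ n"
    "(takagi y - takagi x) / (y - x) \<le> real (a n) - 2 * real n + 4 - real j"
proof
  let ?G = "a (Suc n) - a n"
  define l where "l = a n - 1"
  have l: "Suc l = a n" using positive by (simp add: l_def Suc_le_eq)
  obtain \<sigma> where \<sigma>: "(1/2) ^ ?G \<le> \<sigma>" "\<sigma> \<le> 2 * (1/2) ^ ?G" and x: "x = trunc l + (1 + \<sigma>) / 2 * (1/2) ^ l"
    by (rule x_right_of_midpoint[OF l])
  have G: "1 \<le> ?G" using a_less_a_Suc[of n] by simp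
  have "0 < (1/2::real) ^ ?G" "(1/2::real) ^ ?G \<le> 1/2"
    using power_decreasing[OF G, of "1/2::real"] by auto
  then have \<sigma>_unit: "0 < \<sigma>" "\<sigma> \<le> 1" using \<sigma> by linarith+
  define s where "s = (1/2::real) ^ j"
  have s: "0 < s" "s \<le> 1" by (simp_all add: s_def power_le_one)
  define y where "y = trunc l + (1 - s) / 2 * (1/2) ^ l"
  have "(takagi y - takagi x) / (y - x) = balance l + centre_slope \<sigma> s"
    using slope_across_cell_midpoint[of \<sigma> s l] \<sigma>_unit s x divide_diff_swap by (simp add: y_def)
  moreover have "centre_slope \<sigma> s \<le> 5 - real j"
    unfolding s_def using centre_slope_le[OF G \<sigma>] assms by simp
  ultimately show "(takagi y - takagi x) / (y - x) \<le> real (a n) - 2 * real n + 4 - real j"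
    using balance_a_pred[OF l] by simp
  have "x - y = (\<sigma> + s) / 2 * (1/2) ^ l" by (simp add: x y_def field_simps)
  moreover have "0 \<le> (\<sigma> + s) / 2 * (1/2::real) ^ l" using \<sigma>_unit s by simp
  ultimately have dist: "\<bar>y - x\<bar> = (\<sigma> + s) / 2 * (1/2) ^ l"
    by (metis abs_minus_commute abs_of_nonneg)
  then show "y \<noteq> x" using \<sigma>_unit s by auto
  have "(\<sigma> + s) / 2 * (1/2::real) ^ l \<le> 1 * (1/2) ^ l" using \<sigma>_unit s by (intro mult_right_mono) auto
  moreover have "(1/2::real) ^ l = 2 * (1/2) ^ a n" using l[symmetric] by simp
  moreover have "(1/2::real) ^ a n \<le> (1/2) ^ n" using index_le_a[of n] by (intro power_decreasing) auto
  ultimately show "\<bar>y - x\<bar> \<le> 2 * (1/2) ^ n" using dist by linarith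
qed

lemma slope_le_growth:
  obtains y where "y \<noteq> x" "\<bar>y - x\<bar> \<le> 2 * (1/2) ^ n" "(takagi y - takagi x) / (y - x) \<le> 7 - growth n"
proof -
  let ?G = "a (Suc n) - a n"
  define q where "q = nat \<lceil>log 2 (real ?G)\<rceil>"
  have G: "1 \<le> ?G" using a_less_a_Suc[of n] by simp
  have q: "log 2 (real ?G) \<le> real q" "real q < log 2 (real ?G) + 1"
    using G by (simp_all add: q_def) linarith
  have "q \<le> ?G" using log2_le_minus_one[OF G] q(2) by linarith
  have "real ?G \<le> 2 ^ q"
    using q(1) G by (simp add: log_le_iff powr_realpow)
  moreover have "?G - (?G - q) = q" using \<open>q \<le> ?G\<close> by simp
  ultimately have "real ?G \<le> 2 ^ (?G - (?G - q))" by metis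
  then obtain y where y: "y \<noteq> x" "\<bar>y - x\<bar> \<le> 2 * (1/2) ^ n"
    "(takagi y - takagi x) / (y - x) \<le> real (a n) - 2 * real n + 4 - real (?G - q)"
    by (rule slope_le_before_digit[OF diff_le_self])
  moreover have "real (?G - q) = real ?G - real q" using \<open>q \<le> ?G\<close> by (simp add: of_nat_diff)
  ultimately show ?thesis using that q(2) growth_eq_gap[of n] by fastforce
qed

lemma growth_tendsto_bot:
  assumes "filterlim (\<lambda>h. (takagi (x + h) - takagi x) / h) at_top (at 0)"
  shows "filterlim growth at_bot sequentially"
proof -
  have "\<forall>n. \<exists>y. y \<noteq> x \<and> \<bar>y - x\<bar> \<le> 2 * (1/2) ^ n \<and> (takagi y - takagi x) / (y - x) \<le> 7 - growth n"
    by (meson slope_le_growth)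
  then obtain y where "\<forall>n. y n \<noteq> x \<and> \<bar>y n - x\<bar> \<le> 2 * (1/2) ^ n
      \<and> (takagi (y n) - takagi x) / (y n - x) \<le> 7 - growth n"
    by (metis choice)
  then have y: "\<And>n. y n \<noteq> x" "\<And>n. \<bar>y n - x\<bar> \<le> 2 * (1/2) ^ n"
    "\<And>n. (takagi (y n) - takagi x) / (y n - x) \<le> 7 - growth n"
    by auto
  have "(\<lambda>n. y n - x) \<longlonglongrightarrow> 0"
  proof (rule Lim_null_comparison)
    show "\<forall>\<^sub>F n in sequentially. norm (y n - x) \<le> 2 * (1/2::real) ^ n" using y(2) by simp
    show "(\<lambda>n. 2 * (1/2::real) ^ n) \<longlonglongrightarrow> 0" by (intro tendsto_mult_right_zero LIMSEQ_realpow_zero) auto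
  qed
  then have "filterlim (\<lambda>n. y n - x) (at 0) sequentially" by (rule filterlim_atI) (use y(1) in simp)
  from filterlim_compose[OF assms this]
  have "filterlim (\<lambda>n. (takagi (y n) - takagi x) / (y n - x)) at_top sequentially" by simp
  then show ?thesis
    unfolding filterlim_at_top filterlim_at_bot
  proof (intro allI)
    fix Z :: real
    assume "\<forall>Z. \<forall>\<^sub>F n in sequentially. Z \<le> (takagi (y n) - takagi x) / (y n - x)"
    then have "\<forall>\<^sub>F n in sequentially. 7 - Z \<le> (takagi (y n) - takagi x) / (y n - x)" by blast
    then show "\<forall>\<^sub>F n in sequentially. growth n \<le> Z"
      by (rule eventually_mono) (use y(3) in \<open>smt (verit)\<close>)
  qed
qed

theorem diff_quot_tendsto_top_iff:
  "filterlim (\<lambda>h. (takagi (x + h) - takagi x) / h) at_top (at 0) \<longleftrightarrow> filterlim growth at_bot sequentially"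
  using diff_quot_tendsto_top growth_tendsto_bot by blast

end

theorem corollary1:
  fixes x :: real and a b :: "nat \<Rightarrow> nat"
  assumes "0 < x" "x < 1" "\<not> dyadic x"
    and "strict_mono a" "\<forall>k. a k \<ge> 1" "(\<lambda>k. (1/2) ^ a k) sums x"
    and "strict_mono b" "\<forall>k. b k \<ge> 1" "(\<lambda>k. (1/2) ^ b k) sums (1 - x)"
  shows "(filterlim (\<lambda>h. (takagi (x + h) - takagi x) / h) at_top (at 0) \<longleftrightarrow>
            filterlim (\<lambda>k. real (a (Suc k)) - 2 * real (a k) + 2 * (real k + 1)
                            - log 2 (real (a (Suc k)) - real (a k))) at_bot sequentially)
       \<and> (filterlim (\<lambda>h. (takagi (x + h) - takagi x) / h) at_bot (at 0) \<longleftrightarrow>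
            filterlim (\<lambda>k. real (b (Suc k)) - 2 * real (b k) + 2 * (real k + 1)
                            - log 2 (real (b (Suc k)) - real (b k))) at_bot sequentially)"
proof -
  interpret A: nondyadic_expansion x a
    using assms(3-6) by unfold_locales
  interpret B: nondyadic_expansion "1 - x" b
    using assms(3,7-9) dyadic_one_minus[of "1 - x"] by unfold_locales auto
  let ?g = "\<lambda>h. (takagi (1 - x + h) - takagi (1 - x)) / h"
  have "(\<lambda>h. (takagi (x + h) - takagi x) / h) = (\<lambda>h. - ?g (- h))"
    using takagi_reflect[of "x + _"] takagi_reflect[of x] by (auto simp: algebra_simps)
  then have "filterlim (\<lambda>h. (takagi (x + h) - takagi x) / h) at_bot (at 0)
      \<longleftrightarrow> filterlim (\<lambda>h. ?g (- h)) at_top (at 0)"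
    using filterlim_uminus_at_top[of "\<lambda>h. ?g (- h)"] by simp
  also have "\<dots> \<longleftrightarrow> filterlim ?g at_top (at 0)"
    by (rule filterlim_at_0_reflect)
  finally show ?thesis
    using A.diff_quot_tendsto_top_iff B.diff_quot_tendsto_top_iff
    unfolding A.growth_def[abs_def] B.growth_def[abs_def] by blast
qed

end
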